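(* Let $n,k\ge1$, $\mathfrak g=\mathfrak{gl}_n(\mathbb{C})$, $M=V^{\otimes k}\otimes(V^* )^{\otimes k}$ and $e=(\mathrm{id}-p_1)\cdots(\mathrm{id}-p_k)$. Let $0\le r\le k$, let $\underline s=(s_1<\cdots<s_{k-r})$ be a subset of $\{1,\dots,k\}$ of size $k-r$, let $\underline t=(t_1,\dots,t_{k-r})$ be a sequence of $k-r$ distinct elements of $\{1,\dots,k\}$, let $\lambda,\mu$ be partitions of $r$, let $T$ be a standard tableau of shape $\lambda$ with entries in $\{1,\dots,k\}\setminus\underline s$ and $T^*$ a standard tableau of shape $\mu$ with entries in $\{1,\dots,k\}\setminus\underline t$, and set $y=y_Ty_{T^*}c_{\underline s,\underline t}$. If $s_i=t_i$ for some $i\in\{1,\dots,k-r\}$ (i.e. the product $c_{\underline s,\underline t}$ contains a factor $c_{j,j}$), then $ey=0=ye$.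
   Context: $V=\mathbb{C}^n$ (column vectors, standard basis $v_1,\dots,v_n$), $V^*$ row vectors with dual basis $v_1^*,\dots,v_n^*$. For $1\le i,j\le k$ the contraction $c_{i,j}:M\to M$ is $c_{i,j}(u_1\otimes\cdots\otimes u_k\otimes w_1^*\otimes\cdots\otimes w_k^* )=(w_j^*u_i)\sum_{\ell=1}^n(\text{same tensor with }u_i\text{ replaced by }v_\ell\text{ and }w_j^*\text{ replaced by }v_\ell^* )$. Set $p_i=\frac1n c_{i,i}$ and $c_{\underline s,\underline t}=c_{s_1,t_1}c_{s_2,t_2}\cdots c_{s_{k-r},t_{k-r}}$. A standard tableau of shape $\lambda$ with entries in a set $S$ of size $|\lambda|$ is a filling of the Young diagram of $\lambda$ by the elements of $S$, each used once, increasing along rows and down columns. For such $T$, the row group $R_T$ (resp. column group $C_T$) is the set of permutations of $\{1,\dots,k\}$ fixing every element not in $T$ and sending each entry of $T$ to an entry in the same row (resp. column) of $T$, and $y_T=\big(\sum_{\rho\in R_T}\rho\big)\big(\sum_{\gamma\in C_T}\mathrm{sgn}(\gamma)\gamma\big)\in\mathbb{C}S_k$. Here $y_T$ acts on $M$ by place permutations of the $k$ factors of $V^{\otimes k}$ and $y_{T^*}$ by place permutations of the $k$ factors of $(V^* )^{\otimes k}$. *)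

theory Defs
  imports Complex_Main "HOL-Library.FuncSet" "HOL-Combinatorics.Permutations"
begin

text \<open>Basis of M = V^{\<otimes>k} \<otimes> (V^*)^{\<otimes>k}: a pair (a,b) of index functions
  a, b : {1..k} \<rightarrow> {1..n}; (a,b) stands for
  v_{a 1} \<otimes> ... \<otimes> v_{a k} \<otimes> v_{b 1}^* \<otimes> ... \<otimes> v_{b k}^*.
  Linear operators on M are represented by their matrices w.r.t. this basis:
  A out inp is the coefficient of basis vector out in A(inp).\<close>

type_synonym bidx = "(nat \<Rightarrow> nat) \<times> (nat \<Rightarrow> nat)"
type_synonym op = "bidx \<Rightarrow> bidx \<Rightarrow> complex"

definition basisM :: "nat \<Rightarrow> nat \<Rightarrow> bidx set" where
  "basisM n k = ({1..k} \<rightarrow>\<^sub>E {1..n}) \<times> ({1..k} \<rightarrow>\<^sub>E {1..n})"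

definition op_id :: op where
  "op_id x y = (if x = y then 1 else 0)"

definition op_mult :: "nat \<Rightarrow> nat \<Rightarrow> op \<Rightarrow> op \<Rightarrow> op" where
  "op_mult n k A B = (\<lambda>x z. \<Sum>y\<in>basisM n k. A x y * B y z)"

definition op_prod :: "nat \<Rightarrow> nat \<Rightarrow> op list \<Rightarrow> op" where
  "op_prod n k As = foldr (op_mult n k) As op_id"

definition contr :: "nat \<Rightarrow> nat \<Rightarrow> nat \<Rightarrow> op" where
  "contr n i j = (\<lambda>(a',b') (a,b).
     if a i = b j \<and> (\<exists>l\<in>{1..n}. a' = a(i := l) \<and> b' = b(j := l)) then 1 else 0)"

definition proj :: "nat \<Rightarrow> nat \<Rightarrow> op" where
  "proj n i = (\<lambda>x y. contr n i i x y / of_nat n)"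

definition e_op :: "nat \<Rightarrow> nat \<Rightarrow> op" where
  "e_op n k = op_prod n k (map (\<lambda>i. (\<lambda>x y. op_id x y - proj n i x y)) [1..<k+1])"

definition contr_seq :: "nat \<Rightarrow> nat \<Rightarrow> nat list \<Rightarrow> nat list \<Rightarrow> op" where
  "contr_seq n k s t = op_prod n k (map (\<lambda>(i,j). contr n i j) (zip s t))"

text \<open>place permutations (left action: factor i of the result is factor
  inv \<sigma> i of the input), on the V-factors resp. on the V^*-factors\<close>
definition permV :: "(nat \<Rightarrow> nat) \<Rightarrow> op" where
  "permV \<sigma> = (\<lambda>(a',b') (a,b). if a' = a \<circ> inv \<sigma> \<and> b' = b then 1 else 0)"

definition permVd :: "(nat \<Rightarrow> nat) \<Rightarrow> op" where
  "permVd \<sigma> = (\<lambda>(a',b') (a,b). if a' = a \<and> b' = b \<circ> inv \<sigma> then 1 else 0)"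

text \<open>partitions and tableaux (cells are 0-based (row, column) pairs)\<close>
definition is_partition :: "nat list \<Rightarrow> nat \<Rightarrow> bool" where
  "is_partition lam r \<longleftrightarrow> sorted_wrt (\<ge>) lam \<and> (\<forall>x\<in>set lam. x > 0) \<and> sum_list lam = r"

definition cells :: "nat list \<Rightarrow> (nat \<times> nat) set" where
  "cells lam = {(i, j). i < length lam \<and> j < lam ! i}"

definition standard_tableau :: "nat list \<Rightarrow> nat set \<Rightarrow> (nat \<times> nat \<Rightarrow> nat) \<Rightarrow> bool" where
  "standard_tableau lam S T \<longleftrightarrow>
     bij_betw T (cells lam) S \<and>
     (\<forall>i j j'. (i, j) \<in> cells lam \<longrightarrow> (i, j') \<in> cells lam \<longrightarrow> j < j' \<longrightarrow> T (i, j) < T (i, j')) \<and>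
     (\<forall>i i' j. (i, j) \<in> cells lam \<longrightarrow> (i', j) \<in> cells lam \<longrightarrow> i < i' \<longrightarrow> T (i, j) < T (i', j))"

definition row_group :: "nat \<Rightarrow> nat list \<Rightarrow> (nat \<times> nat \<Rightarrow> nat) \<Rightarrow> (nat \<Rightarrow> nat) set" where
  "row_group k lam T = {\<sigma>. \<sigma> permutes {1..k} \<and> (\<forall>x\<in>{1..k}. x \<notin> T ` cells lam \<longrightarrow> \<sigma> x = x) \<and>
     (\<forall>c\<in>cells lam. \<exists>c'\<in>cells lam. fst c' = fst c \<and> T c' = \<sigma> (T c))}"

definition col_group :: "nat \<Rightarrow> nat list \<Rightarrow> (nat \<times> nat \<Rightarrow> nat) \<Rightarrow> (nat \<Rightarrow> nat) set" where
  "col_group k lam T = {\<sigma>. \<sigma> permutes {1..k} \<and> (\<forall>x\<in>{1..k}. x \<notin> T ` cells lam \<longrightarrow> \<sigma> x = x) \<and>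
     (\<forall>c\<in>cells lam. \<exists>c'\<in>cells lam. snd c' = snd c \<and> T c' = \<sigma> (T c))}"

definition young_op :: "nat \<Rightarrow> nat \<Rightarrow> ((nat \<Rightarrow> nat) \<Rightarrow> op) \<Rightarrow> nat list \<Rightarrow> (nat \<times> nat \<Rightarrow> nat) \<Rightarrow> op" where
  "young_op n k P lam T = op_mult n k
     (\<lambda>x y. \<Sum>\<rho>\<in>row_group k lam T. P \<rho> x y)
     (\<lambda>x y. \<Sum>\<gamma>\<in>col_group k lam T. of_int (sign \<gamma>) * P \<gamma> x y)"

end

theory Submission
  imports Defs
begin

text \<open>Let j = s_i = t_i and C = c_{j,j}. Every factor of y commutes with C: the other
  contractions c_{s_p,t_p} touch neither the V-slot j nor the V^*-slot j (s and t are
  injective), and the permutations in R_T, C_T, R_{T^*}, C_{T^*} fix j, which occurs in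
  neither tableau. Every factor id - p_l of e commutes with C as well. Hence y = C R = R C
  for some R. Finally C^2 = n C, so (id - p_j) C = 0, whence e C = 0 = C e, and
  e y = (e C) R = 0, y e = R (C e) = 0.\<close>

text \<open>Operators only matter on basis indices: outside basisM n k the matrix entries are arbitrary
  (e.g. op_mult n k op_id A vanishes there while A need not), so the operator identities below hold
  up to this equivalence.\<close>

definition op_equiv :: "nat \<Rightarrow> nat \<Rightarrow> op \<Rightarrow> op \<Rightarrow> bool" where
  "op_equiv n k A B \<longleftrightarrow> (\<forall>x\<in>basisM n k. \<forall>z\<in>basisM n k. A x z = B x z)"

definition op_zero :: op where
  "op_zero = (\<lambda>_ _. 0)"

definition op_commute :: "nat \<Rightarrow> nat \<Rightarrow> op \<Rightarrow> op \<Rightarrow> bool" where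
  "op_commute n k A C \<longleftrightarrow> op_equiv n k (op_mult n k A C) (op_mult n k C A)"

lemma finite_basisM: "finite (basisM n k)"
  unfolding basisM_def by (simp add: finite_PiE)

lemma op_equiv_refl [simp]: "op_equiv n k A A"
  by (simp add: op_equiv_def)

lemma op_equiv_sym: "op_equiv n k A B \<Longrightarrow> op_equiv n k B A"
  by (simp add: op_equiv_def)

lemma op_equiv_trans [trans]: "op_equiv n k A B \<Longrightarrow> op_equiv n k B C \<Longrightarrow> op_equiv n k A C"
  by (simp add: op_equiv_def)

lemma op_mult_cong:
  "op_equiv n k A A' \<Longrightarrow> op_equiv n k B B' \<Longrightarrow> op_equiv n k (op_mult n k A B) (op_mult n k A' B')"
  unfolding op_equiv_def op_mult_def by (auto intro!: sum.cong)

lemma op_mult_assoc: "op_mult n k (op_mult n k A B) C = op_mult n k A (op_mult n k B C)"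
  unfolding op_mult_def
  by (auto simp: sum_distrib_left sum_distrib_right mult.assoc intro!: ext sum.swap)

lemma op_mult_id_left: "op_equiv n k (op_mult n k op_id A) A"
proof -
  have "(\<Sum>y\<in>basisM n k. op_id x y * A y z) = (\<Sum>y\<in>basisM n k. if y = x then A x z else 0)" for x z
    unfolding op_id_def by (intro sum.cong) auto
  then show ?thesis unfolding op_equiv_def op_mult_def by (simp add: finite_basisM)
qed

lemma op_mult_id_right: "op_equiv n k (op_mult n k A op_id) A"
proof -
  have "(\<Sum>y\<in>basisM n k. A x y * op_id y z) = (\<Sum>y\<in>basisM n k. if y = z then A x z else 0)" for x z
    unfolding op_id_def by (intro sum.cong) auto
  then show ?thesis unfolding op_equiv_def op_mult_def by (simp add: finite_basisM)
qed

lemma op_mult_zero_left [simp]: "op_mult n k op_zero A = op_zero"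
  unfolding op_mult_def op_zero_def by simp

lemma op_mult_zero_right [simp]: "op_mult n k A op_zero = op_zero"
  unfolding op_mult_def op_zero_def by simp

lemma op_mult_sum_left:
  "op_mult n k (\<lambda>x y. \<Sum>\<rho>\<in>G. f \<rho> * P \<rho> x y) C x z = (\<Sum>\<rho>\<in>G. f \<rho> * op_mult n k (P \<rho>) C x z)"
  unfolding op_mult_def
  by (simp add: sum_distrib_right sum_distrib_left mult.assoc) (rule sum.swap)

lemma op_mult_sum_right:
  "op_mult n k C (\<lambda>x y. \<Sum>\<rho>\<in>G. f \<rho> * P \<rho> x y) x z = (\<Sum>\<rho>\<in>G. f \<rho> * op_mult n k C (P \<rho>) x z)"
  unfolding op_mult_def
  by (simp add: sum_distrib_right sum_distrib_left mult.left_commute) (rule sum.swap)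

lemma op_commute_refl: "op_commute n k C C"
  by (simp add: op_commute_def)

lemma op_commute_id: "op_commute n k op_id C"
  using op_mult_id_left op_mult_id_right op_equiv_trans op_equiv_sym
  unfolding op_commute_def by metis

lemma op_commute_mult:
  assumes "op_commute n k A C" "op_commute n k B C"
  shows "op_commute n k (op_mult n k A B) C"
proof -
  have "op_equiv n k (op_mult n k (op_mult n k A B) C) (op_mult n k A (op_mult n k C B))"
    using assms(2) unfolding op_mult_assoc op_commute_def by (rule op_mult_cong[OF op_equiv_refl])
  also have "op_mult n k A (op_mult n k C B) = op_mult n k (op_mult n k A C) B"
    by (simp add: op_mult_assoc)
  also have "op_equiv n k \<dots> (op_mult n k (op_mult n k C A) B)"
    using assms(1) unfolding op_commute_def by (rule op_mult_cong[OF _ op_equiv_refl])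
  finally show ?thesis
    unfolding op_commute_def by (simp add: op_mult_assoc)
qed

lemma op_commute_prod: "\<forall>G\<in>set L. op_commute n k G C \<Longrightarrow> op_commute n k (op_prod n k L) C"
  by (induction L) (auto simp: op_prod_def op_commute_id intro: op_commute_mult)

lemma op_commute_sum:
  "\<forall>\<rho>\<in>G. op_commute n k (P \<rho>) C \<Longrightarrow> op_commute n k (\<lambda>x y. \<Sum>\<rho>\<in>G. f \<rho> * P \<rho> x y) C"
  unfolding op_commute_def op_equiv_def op_mult_sum_left op_mult_sum_right
  by (auto intro!: sum.cong)

lemma op_prod_append_prod:
  "op_equiv n k (op_prod n k (As @ [op_prod n k Bs])) (op_prod n k (As @ Bs))"
  by (induction As) (simp_all add: op_prod_def op_mult_id_right op_mult_cong)

lemma op_prod_extract: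
  assumes "\<forall>G\<in>set L. op_commute n k G C" "C \<in> set L"
  shows "op_equiv n k (op_prod n k L) (op_mult n k C (op_prod n k (remove1 C L)))"
  using assms
proof (induction L)
  case Nil
  then show ?case by simp
next
  case (Cons A L)
  show ?case
  proof (cases "A = C")
    case True
    then show ?thesis by (simp add: op_prod_def)
  next
    case False
    let ?R = "op_prod n k (remove1 C L)"
    have "op_equiv n k (op_prod n k (A # L)) (op_mult n k A (op_mult n k C ?R))"
      using Cons False by (auto simp: op_prod_def intro: op_mult_cong)
    also have "op_mult n k A (op_mult n k C ?R) = op_mult n k (op_mult n k A C) ?R"
      by (simp add: op_mult_assoc)
    also have "op_equiv n k \<dots> (op_mult n k (op_mult n k C A) ?R)"
      using Cons.prems(1) unfolding op_commute_def by (auto intro: op_mult_cong)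
    finally show ?thesis
      using False by (simp add: op_prod_def op_mult_assoc)
  qed
qed

lemma op_prod_mult_zero:
  assumes "\<forall>G\<in>set L. op_commute n k G C" "G \<in> set L" "op_equiv n k (op_mult n k G C) op_zero"
  shows "op_equiv n k (op_mult n k (op_prod n k L) C) op_zero"
  using assms
proof (induction L)
  case Nil
  then show ?case by simp
next
  case (Cons A L)
  let ?P = "op_prod n k L"
  have head: "op_mult n k (op_prod n k (A # L)) C = op_mult n k A (op_mult n k ?P C)"
    by (simp add: op_prod_def op_mult_assoc)
  show ?case
  proof (cases "G \<in> set L")
    case True
    with Cons have "op_equiv n k (op_mult n k ?P C) op_zero"
      by simp
    then have "op_equiv n k (op_mult n k A (op_mult n k ?P C)) (op_mult n k A op_zero)"
      by (rule op_mult_cong[OF op_equiv_refl])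
    then show ?thesis
      unfolding head by simp
  next
    case False
    with Cons.prems have "A = G"
      by simp
    have "op_equiv n k (op_mult n k A (op_mult n k ?P C)) (op_mult n k A (op_mult n k C ?P))"
      using op_commute_prod[of L n k C] Cons.prems(1) unfolding op_commute_def
      by (auto intro: op_mult_cong)
    also have "op_mult n k A (op_mult n k C ?P) = op_mult n k (op_mult n k A C) ?P"
      by (simp add: op_mult_assoc)
    also have "op_equiv n k \<dots> (op_mult n k op_zero ?P)"
      using Cons.prems(3) \<open>A = G\<close> by (intro op_mult_cong) simp_all
    finally show ?thesis
      unfolding head by simp
  qed
qed

lemma op_prod_annihilated:
  assumes "\<forall>G\<in>set L. op_commute n k G C" "C \<in> set L"
    and "op_equiv n k (op_mult n k E C) op_zero" "op_commute n k E C"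
  shows "op_equiv n k (op_mult n k E (op_prod n k L)) op_zero"
    and "op_equiv n k (op_mult n k (op_prod n k L) E) op_zero"
proof -
  define R where "R = op_prod n k (remove1 C L)"
  have CR: "op_equiv n k (op_prod n k L) (op_mult n k C R)"
    unfolding R_def using assms(1,2) by (rule op_prod_extract)
  have "op_commute n k R C"
    unfolding R_def using assms(1) by (intro op_commute_prod) (meson in_mono set_remove1_subset)
  then have RC: "op_equiv n k (op_prod n k L) (op_mult n k R C)"
    using CR op_equiv_sym op_equiv_trans unfolding op_commute_def by blast
  have "op_equiv n k (op_mult n k E (op_prod n k L)) (op_mult n k (op_mult n k E C) R)"
    unfolding op_mult_assoc using CR by (rule op_mult_cong[OF op_equiv_refl])
  also have "op_equiv n k \<dots> (op_mult n k op_zero R)"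
    using assms(3) by (rule op_mult_cong[OF _ op_equiv_refl])
  finally show "op_equiv n k (op_mult n k E (op_prod n k L)) op_zero"
    by simp
  have "op_equiv n k (op_mult n k (op_prod n k L) E) (op_mult n k R (op_mult n k C E))"
    unfolding op_mult_assoc[symmetric] using RC by (rule op_mult_cong[OF _ op_equiv_refl])
  also have "op_equiv n k \<dots> (op_mult n k R (op_mult n k E C))"
    using assms(4) unfolding op_commute_def by (rule op_mult_cong[OF op_equiv_refl op_equiv_sym])
  also have "op_equiv n k \<dots> (op_mult n k R op_zero)"
    using assms(3) by (rule op_mult_cong[OF op_equiv_refl])
  finally show "op_equiv n k (op_mult n k (op_prod n k L) E) op_zero"
    by simp
qed

lemma contr_apply:
  "contr n i j y (a, b) =
     (\<Sum>l\<in>{1..n}. if y = (a(i := l), b(j := l)) then (if a i = b j then 1 else 0) else 0)"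
proof (cases "\<exists>l\<in>{1..n}. y = (a(i := l), b(j := l))")
  case True
  then obtain l0 where l0: "l0 \<in> {1..n}" "y = (a(i := l0), b(j := l0))"
    by blast
  then have "y = (a(i := l), b(j := l)) \<longleftrightarrow> l = l0" for l
    by (metis fun_upd_same prod.inject)
  then show ?thesis
    using l0 by (auto simp: contr_def if_distrib cong: if_cong)
next
  case False
  then show ?thesis
    by (cases y) (auto simp: contr_def intro!: sum.neutral)
qed

lemma op_mult_single:
  assumes "\<And>y. C y z = (if y = w then 1 else 0)"
  shows "op_mult n k A C x z = (if w \<in> basisM n k then A x w else 0)"
proof -
  have "op_mult n k A C x z = (\<Sum>y\<in>basisM n k. if y = w then A x w else 0)"
    unfolding op_mult_def assms by (auto intro!: sum.cong)
  then show ?thesis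
    by (simp add: finite_basisM)
qed

lemma op_mult_contr:
  "op_mult n k A (contr n i j) x (a, b) =
     (\<Sum>l\<in>{1..n}. if (a(i := l), b(j := l)) \<in> basisM n k
        then A x (a(i := l), b(j := l)) * (if a i = b j then 1 else 0) else 0)"
proof -
  have "op_mult n k A (contr n i j) x (a, b) =
      (\<Sum>l\<in>{1..n}. \<Sum>y\<in>basisM n k.
         A x y * (if y = (a(i := l), b(j := l)) then (if a i = b j then 1 else 0) else 0))"
    unfolding op_mult_def contr_apply sum_distrib_left by (rule sum.swap)
  also have "\<dots> = (\<Sum>l\<in>{1..n}. \<Sum>y\<in>basisM n k. if y = (a(i := l), b(j := l))
         then A x (a(i := l), b(j := l)) * (if a i = b j then 1 else 0) else 0)"
    by (intro sum.cong) auto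
  finally show ?thesis
    by (simp add: finite_basisM)
qed

lemma fun_upd_in_basisM:
  assumes "(a, b) \<in> basisM n k" "i \<in> {1..k}" "j \<in> {1..k}" "l \<in> {1..n}"
  shows "(a(i := l), b(j := l)) \<in> basisM n k"
  using assms unfolding basisM_def
  by (auto dest!: PiE_fun_upd[where x = i and y = l] PiE_fun_upd[where x = j and y = l]
      simp: insert_absorb)

lemma contr_commute:
  assumes "i \<in> {1..k}" "j \<in> {1..k}" "i' \<in> {1..k}" "j' \<in> {1..k}" "i \<noteq> i'" "j \<noteq> j'"
  shows "op_commute n k (contr n i j) (contr n i' j')"
  unfolding op_commute_def op_equiv_def
proof (intro ballI)
  fix x z
  assume "z \<in> basisM n k"
  moreover obtain a b where ab: "z = (a, b)"
    by (cases z)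
  ultimately have upd: "(a(p := l), b(q := l)) \<in> basisM n k"
    if "p \<in> {1..k}" "q \<in> {1..k}" "l \<in> {1..n}" for p q l
    using that fun_upd_in_basisM by blast
  let ?cond = "a i = b j \<and> a i' = b j'"
  have "op_mult n k (contr n i j) (contr n i' j') x z =
      (\<Sum>l\<in>{1..n}. contr n i j x (a(i' := l), b(j' := l)) * (if a i' = b j' then 1 else 0))"
    unfolding ab op_mult_contr using assms upd by (auto intro!: sum.cong)
  also have "\<dots> = (\<Sum>l\<in>{1..n}. \<Sum>m\<in>{1..n}.
      if x = (a(i' := l, i := m), b(j' := l, j := m)) \<and> ?cond then 1 else 0)"
    unfolding contr_apply using assms by (auto simp: sum_distrib_right intro!: sum.cong)
  also have "\<dots> = (\<Sum>m\<in>{1..n}. \<Sum>l\<in>{1..n}.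
      if x = (a(i := m, i' := l), b(j := m, j' := l)) \<and> ?cond then 1 else 0)"
    by (subst sum.swap) (use assms in \<open>auto simp: fun_upd_twist intro!: sum.cong\<close>)
  also have "\<dots> = (\<Sum>m\<in>{1..n}. contr n i' j' x (a(i := m), b(j := m)) * (if a i = b j then 1 else 0))"
    unfolding contr_apply using assms by (auto simp: sum_distrib_right intro!: sum.cong)
  also have "\<dots> = op_mult n k (contr n i' j') (contr n i j) x z"
    unfolding ab op_mult_contr using assms upd by (auto intro!: sum.cong)
  finally show "op_mult n k (contr n i j) (contr n i' j') x z =
      op_mult n k (contr n i' j') (contr n i j) x z" .
qed

lemma contr_square:
  assumes "i \<in> {1..k}" "j \<in> {1..k}"
  shows "op_equiv n k (op_mult n k (contr n i j) (contr n i j)) (\<lambda>x z. of_nat n * contr n i j x z)"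
  unfolding op_equiv_def
proof (intro ballI)
  fix x z
  assume z: "z \<in> basisM n k"
  obtain a b where ab: "z = (a, b)"
    by (cases z)
  have "op_mult n k (contr n i j) (contr n i j) x z =
      (\<Sum>l\<in>{1..n}. contr n i j x (a(i := l), b(j := l)) * (if a i = b j then 1 else 0))"
    unfolding ab op_mult_contr using fun_upd_in_basisM z ab assms by (auto intro!: sum.cong)
  also have "\<dots> = (\<Sum>l\<in>{1..n}. contr n i j x (a, b))"
    by (intro sum.cong) (auto simp: contr_apply)
  finally show "op_mult n k (contr n i j) (contr n i j) x z = of_nat n * contr n i j x z"
    using ab by simp
qed

definition relabel_op :: "((nat \<Rightarrow> nat) \<Rightarrow> nat \<Rightarrow> nat) \<Rightarrow> ((nat \<Rightarrow> nat) \<Rightarrow> nat \<Rightarrow> nat) \<Rightarrow> op" where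
  "relabel_op \<alpha> \<beta> = (\<lambda>(a', b') (a, b). if a' = \<alpha> a \<and> b' = \<beta> b then 1 else 0)"

lemma relabel_op_apply: "relabel_op \<alpha> \<beta> y (a, b) = (if y = (\<alpha> a, \<beta> b) then 1 else 0)"
  by (cases y) (simp add: relabel_op_def)

lemma relabel_op_commute_contr:
  assumes "i \<in> {1..k}" "j \<in> {1..k}"
    and closed: "\<And>a b. (a, b) \<in> basisM n k \<Longrightarrow> (\<alpha> a, \<beta> b) \<in> basisM n k"
    and \<alpha>_upd: "\<And>a l. \<alpha> (a(i := l)) = (\<alpha> a)(i := l)"
    and \<beta>_upd: "\<And>b l. \<beta> (b(j := l)) = (\<beta> b)(j := l)"
  shows "op_commute n k (relabel_op \<alpha> \<beta>) (contr n i j)"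
  unfolding op_commute_def op_equiv_def
proof (intro ballI)
  fix x z
  assume z: "z \<in> basisM n k"
  obtain a b where ab: "z = (a, b)"
    by (cases z)
  have fix_i: "\<alpha> a i = a i" and fix_j: "\<beta> b j = b j"
    using fun_cong[OF \<alpha>_upd[of a "a i"], of i] fun_cong[OF \<beta>_upd[of b "b j"], of j] by simp_all
  have "op_mult n k (relabel_op \<alpha> \<beta>) (contr n i j) x z =
      (\<Sum>l\<in>{1..n}. relabel_op \<alpha> \<beta> x (a(i := l), b(j := l)) * (if a i = b j then 1 else 0))"
    unfolding ab op_mult_contr using fun_upd_in_basisM z ab assms(1,2) by (auto intro!: sum.cong)
  also have "\<dots> = contr n i j x (\<alpha> a, \<beta> b)"
    unfolding contr_apply
    by (intro sum.cong) (simp_all add: relabel_op_apply \<alpha>_upd \<beta>_upd fix_i fix_j)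
  also have "\<dots> = op_mult n k (contr n i j) (relabel_op \<alpha> \<beta>) x z"
    unfolding ab using closed z ab
    by (subst op_mult_single[where C = "relabel_op \<alpha> \<beta>" and z = "(a, b)", OF relabel_op_apply])
      simp
  finally show "op_mult n k (relabel_op \<alpha> \<beta>) (contr n i j) x z =
      op_mult n k (contr n i j) (relabel_op \<alpha> \<beta>) x z" .
qed

lemma permV_eq_relabel_op: "permV \<sigma> = relabel_op (\<lambda>a. a \<circ> inv \<sigma>) id"
  by (auto simp: permV_def relabel_op_def fun_eq_iff)

lemma permVd_eq_relabel_op: "permVd \<sigma> = relabel_op id (\<lambda>b. b \<circ> inv \<sigma>)"
  by (auto simp: permVd_def relabel_op_def fun_eq_iff)

lemma comp_inv_in_PiE:
  assumes "\<sigma> permutes A" "a \<in> A \<rightarrow>\<^sub>E B"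
  shows "a \<circ> inv \<sigma> \<in> A \<rightarrow>\<^sub>E B"
proof -
  have p: "inv \<sigma> permutes A"
    using assms(1) by (rule permutes_inv)
  show ?thesis
    using assms(2) permutes_in_image[OF p] permutes_not_in[OF p]
    by (auto simp: PiE_iff extensional_def)
qed

lemma fun_upd_comp_inv:
  assumes "\<sigma> permutes A" "\<sigma> j = j"
  shows "a(j := l) \<circ> inv \<sigma> = (a \<circ> inv \<sigma>)(j := l)"
proof -
  have "inv \<sigma> x = j \<longleftrightarrow> x = j" for x
    using assms by (metis permutes_inverses(1,2))
  then show ?thesis
    by (auto simp: fun_eq_iff)
qed

lemma permV_commute_contr:
  assumes "\<sigma> permutes {1..k}" "\<sigma> j = j" "j \<in> {1..k}"
  shows "op_commute n k (permV \<sigma>) (contr n j j)"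
  unfolding permV_eq_relabel_op using assms
  by (intro relabel_op_commute_contr) (auto simp: basisM_def comp_inv_in_PiE fun_upd_comp_inv)

lemma permVd_commute_contr:
  assumes "\<sigma> permutes {1..k}" "\<sigma> j = j" "j \<in> {1..k}"
  shows "op_commute n k (permVd \<sigma>) (contr n j j)"
  unfolding permVd_eq_relabel_op using assms
  by (intro relabel_op_commute_contr) (auto simp: basisM_def comp_inv_in_PiE fun_upd_comp_inv)

lemma young_op_commute:
  assumes "\<forall>\<sigma>\<in>row_group k lam T \<union> col_group k lam T. op_commute n k (P \<sigma>) C"
  shows "op_commute n k (young_op n k P lam T) C"
proof -
  have "op_commute n k (\<lambda>x y. \<Sum>\<rho>\<in>row_group k lam T. P \<rho> x y) C"
    using op_commute_sum[where f = "\<lambda>_. 1" and G = "row_group k lam T"] assms by simp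
  moreover have "op_commute n k (\<lambda>x y. \<Sum>\<gamma>\<in>col_group k lam T. of_int (sign \<gamma>) * P \<gamma> x y) C"
    using op_commute_sum[where G = "col_group k lam T"] assms by simp
  ultimately show ?thesis
    unfolding young_op_def by (rule op_commute_mult)
qed

lemma tableau_group_fixes:
  assumes "standard_tableau lam ({1..k} - S) T" "j \<in> S"
    and "\<sigma> \<in> row_group k lam T \<union> col_group k lam T"
  shows "\<sigma> permutes {1..k}" "\<sigma> j = j"
proof -
  have entries: "T ` cells lam = {1..k} - S"
    using assms(1) unfolding standard_tableau_def by (simp add: bij_betw_def)
  show perm: "\<sigma> permutes {1..k}"
    using assms(3) unfolding row_group_def col_group_def by blast
  have "\<forall>x\<in>{1..k}. x \<notin> T ` cells lam \<longrightarrow> \<sigma> x = x"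
    using assms(3) unfolding row_group_def col_group_def by blast
  then show "\<sigma> j = j"
    using entries assms(2) permutes_not_in[OF perm, of j] by blast
qed

lemma young_op_commute_contr:
  assumes "standard_tableau lam ({1..k} - S) T" "j \<in> S"
    and "\<And>\<sigma>. \<sigma> permutes {1..k} \<Longrightarrow> \<sigma> j = j \<Longrightarrow> op_commute n k (P \<sigma>) (contr n j j)"
  shows "op_commute n k (young_op n k P lam T) (contr n j j)"
  using assms tableau_group_fixes by (intro young_op_commute) blast

lemma op_mult_id_minus_proj_left:
  "op_mult n k (\<lambda>x y. op_id x y - proj n l x y) C x z =
     op_mult n k op_id C x z - op_mult n k (contr n l l) C x z / of_nat n"
  unfolding op_mult_def proj_def by (simp add: left_diff_distrib sum_subtractf sum_divide_distrib)

lemma op_mult_id_minus_proj_right: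
  "op_mult n k C (\<lambda>x y. op_id x y - proj n l x y) x z =
     op_mult n k C op_id x z - op_mult n k C (contr n l l) x z / of_nat n"
  unfolding op_mult_def proj_def by (simp add: right_diff_distrib sum_subtractf sum_divide_distrib)

lemma id_minus_proj_commute:
  "op_commute n k (contr n l l) C \<Longrightarrow> op_commute n k (\<lambda>x y. op_id x y - proj n l x y) C"
  using op_commute_id[of n k C]
  unfolding op_commute_def op_equiv_def op_mult_id_minus_proj_left op_mult_id_minus_proj_right
  by simp

lemma id_minus_proj_mult_contr:
  assumes "n \<ge> 1" "j \<in> {1..k}"
  shows "op_equiv n k (op_mult n k (\<lambda>x y. op_id x y - proj n j x y) (contr n j j)) op_zero"
  using op_mult_id_left[of n k "contr n j j"] contr_square[OF assms(2,2), of n] assms(1)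
  unfolding op_equiv_def op_mult_id_minus_proj_left op_zero_def by simp

lemma id_minus_proj_commute_contr:
  assumes "l \<in> {1..k}" "j \<in> {1..k}"
  shows "op_commute n k (\<lambda>x y. op_id x y - proj n l x y) (contr n j j)"
proof (rule id_minus_proj_commute)
  show "op_commute n k (contr n l l) (contr n j j)"
    using assms by (cases "l = j") (simp_all add: op_commute_refl contr_commute)
qed

lemma e_op_factors_commute_contr:
  "j \<in> {1..k} \<Longrightarrow>
     \<forall>G\<in>set (map (\<lambda>l x y. op_id x y - proj n l x y) [1..<k+1]). op_commute n k G (contr n j j)"
  by (auto intro: id_minus_proj_commute_contr)

lemma e_op_commute_contr: "j \<in> {1..k} \<Longrightarrow> op_commute n k (e_op n k) (contr n j j)"
  unfolding e_op_def by (intro op_commute_prod e_op_factors_commute_contr)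

lemma e_op_mult_contr:
  assumes "n \<ge> 1" "j \<in> {1..k}"
  shows "op_equiv n k (op_mult n k (e_op n k) (contr n j j)) op_zero"
proof -
  have "(\<lambda>x y. op_id x y - proj n j x y) \<in> set (map (\<lambda>l x y. op_id x y - proj n l x y) [1..<k+1])"
    using assms(2) unfolding set_map by (intro imageI) auto
  then show ?thesis
    unfolding e_op_def
    by (rule op_prod_mult_zero[OF e_op_factors_commute_contr[OF assms(2)] _
          id_minus_proj_mult_contr[OF assms]])
qed

lemma contr_zip_commute_contr:
  assumes "distinct s" "distinct t" "set s \<subseteq> {1..k}" "set t \<subseteq> {1..k}"
    and "i < length s" "i < length t" "s ! i = t ! i"
  shows "\<forall>G\<in>set (map (\<lambda>(p, q). contr n p q) (zip s t)). op_commute n k G (contr n (s ! i) (s ! i))"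
proof
  fix G
  assume "G \<in> set (map (\<lambda>(p, q). contr n p q) (zip s t))"
  then obtain p where p: "p < length s" "p < length t" "G = contr n (s ! p) (t ! p)"
    by (auto simp: set_zip)
  show "op_commute n k G (contr n (s ! i) (s ! i))"
  proof (cases "p = i")
    case True
    then show ?thesis
      using p assms(7) by (simp add: op_commute_refl)
  next
    case False
    then have "s ! p \<noteq> s ! i" "t ! p \<noteq> t ! i"
      using p assms(1,2,5,6) by (simp_all add: nth_eq_iff_index_eq)
    moreover have "s ! p \<in> {1..k}" "t ! p \<in> {1..k}" "s ! i \<in> {1..k}"
      using p assms(3-5) nth_mem by blast+
    ultimately show ?thesis
      unfolding p(3) using assms(7) by (intro contr_commute) simp_all
  qed
qed

theorem lemma1p13:
  fixes n k r :: nat and s t lam mu :: "nat list" and T Ts :: "nat \<times> nat \<Rightarrow> nat"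
  assumes "n \<ge> 1" and "k \<ge> 1" and "r \<le> k"
    and "length s = k - r" and "sorted_wrt (<) s" and "set s \<subseteq> {1..k}"
    and "length t = k - r" and "distinct t" and "set t \<subseteq> {1..k}"
    and "is_partition lam r" and "is_partition mu r"
    and "standard_tableau lam ({1..k} - set s) T"
    and "standard_tableau mu ({1..k} - set t) Ts"
    and "\<exists>i < k - r. s ! i = t ! i"
  shows "let y = op_prod n k [young_op n k permV lam T, young_op n k permVd mu Ts,
                              contr_seq n k s t]
         in \<forall>x\<in>basisM n k. \<forall>z\<in>basisM n k.
              op_mult n k (e_op n k) y x z = 0 \<and> op_mult n k y (e_op n k) x z = 0"
proof -
  obtain i where i: "i < k - r" "s ! i = t ! i"
    using assms(14) by blast
  define j where "j = s ! i"
  let ?Y = "op_prod n k [young_op n k permV lam T, young_op n k permVd mu Ts, contr_seq n k s t]"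
  let ?L = "[young_op n k permV lam T, young_op n k permVd mu Ts] @
    map (\<lambda>(p, q). contr n p q) (zip s t)"
  have i_len: "i < length s" "i < length t"
    using i(1) assms(4,7) by simp_all
  have j: "j \<in> set s" "j \<in> set t" "j \<in> {1..k}"
    unfolding j_def using i_len nth_mem i(2) assms(6) by fastforce+
  have diagonal: "contr n j j \<in> set ?L"
    using i_len i(2) unfolding j_def set_append set_map set_zip by force
  have commuting: "\<forall>G\<in>set ?L. op_commute n k G (contr n j j)"
    using contr_zip_commute_contr[of s t k i n] assms(5,6,8,9,12,13) i(2) i_len j
    by (auto simp: strict_sorted_iff j_def
        intro!: young_op_commute_contr permV_commute_contr permVd_commute_contr)
  have annihilated:
    "op_equiv n k (op_mult n k (e_op n k) (op_prod n k ?L)) op_zero"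
    "op_equiv n k (op_mult n k (op_prod n k ?L) (e_op n k)) op_zero"
    using op_prod_annihilated[OF commuting diagonal] e_op_mult_contr[OF assms(1) j(3)]
      e_op_commute_contr[OF j(3)] by blast+
  have Y: "op_equiv n k ?Y (op_prod n k ?L)"
    using op_prod_append_prod[of n k "[_, _]"] by (simp add: contr_seq_def)
  show ?thesis
    using op_equiv_trans[OF op_mult_cong[OF op_equiv_refl Y] annihilated(1)]
      op_equiv_trans[OF op_mult_cong[OF Y op_equiv_refl] annihilated(2)]
    unfolding Let_def op_equiv_def op_zero_def by simp
qed

end
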